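(* For every $i\ge0$ there exist constants $c^0_i,c^1_i,\tilde c^1_i\in\mathbb C$ such that, with $z=z_1$, $$\Pi^0_i=c^0_i\,z^{n i}\frac{d^{n i}}{dz^{n i}}F(z),\qquad \Pi^0_i\log z+\Pi^1_i=c^1_i\,z^{n i}\frac{d^{n i}}{dz^{n i}}\big(F(z)\log z+\tilde G(z)\big)+\tilde c^1_i\,\Pi^0_i .$$
   Context: Let $\theta_i=z_i\,\partial/\partial z_i$. Fix an integer $n\ge1$ and constants $a_0\neq0,a_1,a_2$. Consider the system $L_1=-n\theta_1\theta_2+\theta_1^2-a_0z_1(\theta_1+a_1)(\theta_1+a_2)$, $L_2=\theta_2^{n}-(-1)^n z_2\,(n\theta_2-\theta_1)(n\theta_2-\theta_1+1)\cdots(n\theta_2-\theta_1+n-1)$. Let $\Pi^0$ be the solution holomorphic at $0$ with $\Pi^0(0)=1$ and, for $a=1,2$, $\Pi^a=\Pi^0\log z_a+(\text{holomorphic at }0)$ solutions. Expand $\Pi^0=\sum_{i\ge0}\Pi^0_i(z_1)z_2^i$ and $\Pi^a=\Pi^0\log z_a+\sum_{i\ge0}\Pi^a_i(z_1)z_2^i$. Let $F(z)={}_2F_1(a_1,a_2;1;a_0z)=\sum_{k\ge0}\frac{(a_1)_k(a_2)_k}{(k!)^2}(a_0z)^k$ (Pochhammer symbols $(a)_k=a(a+1)\cdots(a+k-1)$), and $\tilde G(z)=\sum_{k\ge1}\frac{(a_1)_k(a_2)_k}{(k!)^2}\Big[\sum_{j=1}^2\sum_{l=0}^{k-1}\big(\tfrac1{a_j+l}-\tfrac1{1+l}\big)\Big](a_0z)^k$,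 so that $F$ and $F\log z+\tilde G$ are solutions of $\theta^2y-a_0z(\theta+a_1)(\theta+a_2)y=0$, $\theta=z\,d/dz$. *)

theory Defs
  imports "HOL-Analysis.Analysis" "HOL-Computational_Algebra.Formal_Laurent_Series"
begin

(* A double power series  sum_{k,i} s k i * z1^k * z2^i  is represented by its
   coefficient array s :: nat => nat => complex  (k = exponent of z1, i = exponent of z2). *)
type_synonym ser2 = "nat \<Rightarrow> nat \<Rightarrow> complex"

(* A function of the form  p * log z1 + q * log z2 + g  with p, q, g double power series
   is represented by the triple (p, q, g). *)
type_synonym lser = "ser2 \<times> ser2 \<times> ser2"

definition holo0 :: "ser2 \<Rightarrow> bool" where
  "holo0 s \<longleftrightarrow> (\<exists>r>0. (\<lambda>(k,i). norm (s k i) * r ^ (k + i)) summable_on (UNIV :: (nat \<times> nat) set))"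

definition ladd :: "lser \<Rightarrow> lser \<Rightarrow> lser" where
  "ladd A B = (case A of (p,q,g) \<Rightarrow> case B of (p',q',g') \<Rightarrow>
     (\<lambda>k i. p k i + p' k i, \<lambda>k i. q k i + q' k i, \<lambda>k i. g k i + g' k i))"

definition lscale :: "complex \<Rightarrow> lser \<Rightarrow> lser" where
  "lscale c A = (case A of (p,q,g) \<Rightarrow> (\<lambda>k i. c * p k i, \<lambda>k i. c * q k i, \<lambda>k i. c * g k i))"

(* theta_1 = z1 d/dz1 :  theta_1 (p log z1 + q log z2 + g) = (theta_1 p) log z1 + (theta_1 q) log z2 + (p + theta_1 g) *)
definition th1 :: "lser \<Rightarrow> lser" where
  "th1 A = (case A of (p,q,g) \<Rightarrow>
     (\<lambda>k i. of_nat k * p k i, \<lambda>k i. of_nat k * q k i, \<lambda>k i. p k i + of_nat k * g k i))"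

definition th2 :: "lser \<Rightarrow> lser" where
  "th2 A = (case A of (p,q,g) \<Rightarrow>
     (\<lambda>k i. of_nat i * p k i, \<lambda>k i. of_nat i * q k i, \<lambda>k i. q k i + of_nat i * g k i))"

definition shift1 :: "ser2 \<Rightarrow> ser2" where
  "shift1 s = (\<lambda>k i. if k = 0 then 0 else s (k - 1) i)"
definition shift2 :: "ser2 \<Rightarrow> ser2" where
  "shift2 s = (\<lambda>k i. if i = 0 then 0 else s k (i - 1))"
definition mulz1 :: "lser \<Rightarrow> lser" where
  "mulz1 A = (case A of (p,q,g) \<Rightarrow> (shift1 p, shift1 q, shift1 g))"
definition mulz2 :: "lser \<Rightarrow> lser" where
  "mulz2 A = (case A of (p,q,g) \<Rightarrow> (shift2 p, shift2 q, shift2 g))"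

(* L1 = -n th1 th2 + th1^2 - a0 z1 (th1 + a1)(th1 + a2) *)
definition L1 :: "nat \<Rightarrow> complex \<Rightarrow> complex \<Rightarrow> complex \<Rightarrow> lser \<Rightarrow> lser" where
  "L1 n a0 a1 a2 A =
     ladd (ladd (lscale (- of_nat n) (th1 (th2 A))) (th1 (th1 A)))
          (lscale (- a0) (mulz1 (ladd (th1 (ladd (th1 A) (lscale a2 A)))
                                      (lscale a1 (ladd (th1 A) (lscale a2 A))))))"

fun prodop :: "nat \<Rightarrow> nat \<Rightarrow> lser \<Rightarrow> lser" where
  "prodop n 0 A = A"
| "prodop n (Suc m) A =
     (let B = prodop n m A in
      ladd (ladd (lscale (of_nat n) (th2 B)) (lscale (-1) (th1 B))) (lscale (of_nat m) B))"

(* L2 = th2^n - (-1)^n z2 (n th2 - th1)(n th2 - th1 + 1) ... (n th2 - th1 + n - 1) *)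
definition L2 :: "nat \<Rightarrow> lser \<Rightarrow> lser" where
  "L2 n A = ladd ((th2 ^^ n) A) (lscale (- ((-1) ^ n)) (mulz2 (prodop n n A)))"

definition lzero :: lser where
  "lzero = ((\<lambda>k i. 0), (\<lambda>k i. 0), (\<lambda>k i. 0))"

(* the hypergeometric series F(z) = 2F1(a1,a2;1;a0 z) *)
definition Fser :: "complex \<Rightarrow> complex \<Rightarrow> complex \<Rightarrow> complex fps" where
  "Fser a0 a1 a2 = Abs_fps (\<lambda>k. pochhammer a1 k * pochhammer a2 k / (fact k)^2 * a0 ^ k)"

(* The factor (a_j)_k * sum_{l<k} 1/(a_j+l) is written as
   sum_{l<k} prod_{m<k, m<>l} (a_j+m), which equals it whenever the paper's expression is defined
   and is its continuous extension otherwise. *)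
definition Gser :: "complex \<Rightarrow> complex \<Rightarrow> complex \<Rightarrow> complex fps" where
  "Gser a0 a1 a2 = Abs_fps (\<lambda>k. a0 ^ k / (fact k)^2 *
     (\<Sum>l<k. (\<Prod>m\<in>{..<k} - {l}. a1 + of_nat m) * pochhammer a2 k
            + pochhammer a1 k * (\<Prod>m\<in>{..<k} - {l}. a2 + of_nat m)
            - 2 * pochhammer a1 k * pochhammer a2 k / (1 + of_nat l)))"

(* Functions A * log z + B of one variable, A, B formal Laurent series, represented by (A, B).
   d/dz (A log z + B) = A' log z + (A / z + B'). *)
definition dlog :: "complex fls \<times> complex fls \<Rightarrow> complex fls \<times> complex fls" where
  "dlog P = (fls_deriv (fst P), fst P * fls_X_inv + fls_deriv (snd P))"

definition zdlog :: "nat \<Rightarrow> complex fls \<times> complex fls \<Rightarrow> complex fls \<times> complex fls" where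
  "zdlog m P = (fls_X ^ m * fst ((dlog ^^ m) P), fls_X ^ m * snd ((dlog ^^ m) P))"

end

theory Submission
  imports Defs
begin

text \<open>
  Everything is coefficientwise. On \<open>z1^k z2^i\<close> the operator \<open>n \<theta>2 - \<theta>1\<close> acts as
  multiplication by \<open>n i - k\<close>, and on the \<open>log z1\<close> part it also contributes the derivative
  of that factor. Hence \<open>L2\<close> passes from the \<open>z2^i\<close>-column to the \<open>z2^(i+1)\<close>-column by
  multiplying the \<open>k\<close>-th coefficient with the falling factorial \<open>(k - n i)\<^sub>n / (i+1)^n\<close>.
  Since \<open>z^m d^m/dz^m\<close> multiplies the \<open>k\<close>-th coefficient by \<open>(k)\<^sub>m\<close> (and acts on
  \<open>F log z + G\<close> through the derivative of \<open>(k)\<^sub>m\<close>), and \<open>(k)\<^sub>m (k - m)\<^sub>n = (k)\<^sub>m\<^sub>+\<^sub>n\<close>,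
  induction on \<open>i\<close> reduces the claim to the column \<open>i = 0\<close>. There \<open>L1\<close> is the
  hypergeometric recurrence, whose solutions with the given initial values are \<open>F\<close> and
  \<open>G + c F\<close>.
\<close>

fun falling_fact :: "nat \<Rightarrow> 'a::comm_ring_1 \<Rightarrow> 'a" where
  "falling_fact 0 x = 1"
| "falling_fact (Suc m) x = falling_fact m x * (x - of_nat m)"

fun falling_fact_deriv :: "nat \<Rightarrow> 'a::comm_ring_1 \<Rightarrow> 'a" where
  "falling_fact_deriv 0 x = 0"
| "falling_fact_deriv (Suc m) x = falling_fact_deriv m x * (x - of_nat m) + falling_fact m x"

lemma falling_fact_add:
  "falling_fact (m + l) x = falling_fact m x * falling_fact l (x - of_nat m)"
  "falling_fact_deriv (m + l) x =
     falling_fact_deriv m x * falling_fact l (x - of_nat m) + falling_fact m x * falling_fact_deriv l (x - of_nat m)"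
  by (induction l) (simp_all add: algebra_simps)

lemma falling_fact_of_nat_less: "k < m \<Longrightarrow> falling_fact m (of_nat k) = 0"
  by (induction m) (auto simp: less_Suc_eq)

definition pochhammer_deriv :: "'a::comm_semiring_1 \<Rightarrow> nat \<Rightarrow> 'a" where
  "pochhammer_deriv a k = (\<Sum>l<k. \<Prod>m\<in>{..<k} - {l}. a + of_nat m)"

lemma pochhammer_deriv_0 [simp]: "pochhammer_deriv a 0 = 0"
  by (simp add: pochhammer_deriv_def)

lemma pochhammer_deriv_Suc:
  "pochhammer_deriv a (Suc k) = pochhammer_deriv a k * (a + of_nat k) + pochhammer a k"
proof -
  have "(\<Prod>m\<in>{..<Suc k} - {l}. a + of_nat m) = (\<Prod>m\<in>{..<k} - {l}. a + of_nat m) * (a + of_nat k)"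
    if "l < k" for l
  proof -
    have "{..<Suc k} - {l} = insert k ({..<k} - {l})" using that by auto
    then show ?thesis by (simp add: mult.commute)
  qed
  moreover have "{..<Suc k} - {k} = {0..<k}" by auto
  ultimately show ?thesis
    unfolding pochhammer_deriv_def sum.lessThan_Suc sum_distrib_right
    by (simp add: pochhammer_prod)
qed

lemma falling_fact_conv_pochhammer:
  "falling_fact m y = (-1) ^ m * pochhammer (- y) m"
  "falling_fact_deriv m y = - ((-1) ^ m * pochhammer_deriv (- y) m)"
  by (induction m) (simp_all add: pochhammer_Suc pochhammer_deriv_Suc algebra_simps)

lemma zdlog_Suc_nth:
  "fls_nth (fst (zdlog (Suc m) P)) t = (of_int t - of_nat m) * fls_nth (fst (zdlog m P)) t"
  "fls_nth (snd (zdlog (Suc m) P)) t =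
     fls_nth (fst (zdlog m P)) t + (of_int t - of_nat m) * fls_nth (snd (zdlog m P)) t"
proof -
  obtain a b where ab: "(dlog ^^ m) P = (a, b)" by fastforce
  then have "(dlog ^^ Suc m) P = (fls_deriv a, a * fls_X_inv + fls_deriv b)"
    by (simp add: dlog_def)
  with ab show
    "fls_nth (fst (zdlog (Suc m) P)) t = (of_int t - of_nat m) * fls_nth (fst (zdlog m P)) t"
    "fls_nth (snd (zdlog (Suc m) P)) t =
       fls_nth (fst (zdlog m P)) t + (of_int t - of_nat m) * fls_nth (snd (zdlog m P)) t"
    unfolding zdlog_def
    by (simp_all only: fls_X_power_times_conv_shift fls_X_inv_times_conv_shift fst_conv snd_conv)
      (simp_all add: algebra_simps)
qed

lemma zdlog_fps_to_fls:
  "zdlog m (fps_to_fls A, fps_to_fls B) =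
    (fps_to_fls (Abs_fps (\<lambda>k. falling_fact m (of_nat k) * A $ k)),
     fps_to_fls (Abs_fps (\<lambda>k. falling_fact m (of_nat k) * B $ k + falling_fact_deriv m (of_nat k) * A $ k)))"
proof (induction m)
  case 0
  show ?case by (simp add: zdlog_def fps_nth_inverse)
next
  case (Suc m)
  then show ?case
    by (auto simp: prod_eq_iff fls_eq_iff zdlog_Suc_nth algebra_simps)
qed

lemma fps_deriv_iterate_nth:
  "((fps_deriv ^^ m) f) $ j = falling_fact m (of_nat (j + m)) * f $ (j + m)"
proof (induction m arbitrary: j)
  case 0
  show ?case by simp
next
  case (Suc m)
  have "((fps_deriv ^^ Suc m) f) $ j = of_nat (Suc j) * ((fps_deriv ^^ m) f) $ Suc j"
    by simp
  also have "\<dots> = falling_fact (Suc m) (of_nat (j + Suc m)) * f $ (j + Suc m)"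
    by (simp add: Suc algebra_simps)
  finally show ?case .
qed

lemma fps_X_power_mult_deriv_iterate_nth:
  "(fps_X ^ m * (fps_deriv ^^ m) f) $ k = falling_fact m (of_nat k) * f $ k"
  by (cases "m \<le> k") (auto simp: fps_X_power_mult_nth fps_deriv_iterate_nth falling_fact_of_nat_less)

lemma Gser_nth:
  "Gser a0 a1 a2 $ k = a0 ^ k / (fact k)^2 *
     (pochhammer_deriv a1 k * pochhammer a2 k + pochhammer a1 k * pochhammer_deriv a2 k
      - 2 * pochhammer a1 k * pochhammer a2 k * harm k)"
proof -
  have "(\<Sum>l<k. 2 * pochhammer a1 k * pochhammer a2 k / (1 + of_nat l)) =
        2 * pochhammer a1 k * pochhammer a2 k * harm k"
    by (simp add: harm_altdef sum_distrib_left divide_inverse)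
  then show ?thesis
    by (simp add: Gser_def pochhammer_deriv_def sum.distrib sum_subtractf
        sum_distrib_left sum_distrib_right)
qed

lemma Fser_Suc:
  "of_nat (Suc k)^2 * Fser a0 a1 a2 $ Suc k = a0 * (of_nat k + a1) * (of_nat k + a2) * Fser a0 a1 a2 $ k"
proof -
  have "(of_nat (Suc k) :: complex) \<noteq> 0" "(fact k :: complex) \<noteq> 0"
    by (simp_all del: of_nat_Suc)
  then show ?thesis
    by (simp add: Fser_def pochhammer_Suc power2_eq_square field_simps del: of_nat_Suc)
qed

lemma Gser_Suc:
  "of_nat (Suc k)^2 * Gser a0 a1 a2 $ Suc k + 2 * of_nat (Suc k) * Fser a0 a1 a2 $ Suc k
     = a0 * ((2 * of_nat k + a1 + a2) * Fser a0 a1 a2 $ k + (of_nat k + a1) * (of_nat k + a2) * Gser a0 a1 a2 $ k)"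
proof -
  have "(of_nat (Suc k) :: complex) \<noteq> 0" "(fact k :: complex) \<noteq> 0"
    by (simp_all del: of_nat_Suc)
  then show ?thesis
    by (simp add: Fser_def Gser_nth pochhammer_Suc pochhammer_deriv_Suc harm_Suc power2_eq_square
        field_simps del: of_nat_Suc)
qed

lemma prodop_log_free:
  "prodop n m (p, \<lambda>k i. 0, g) =
    (\<lambda>k i. pochhammer (of_nat (n * i) - of_nat k) m * p k i, \<lambda>k i. 0,
     \<lambda>k i. pochhammer (of_nat (n * i) - of_nat k) m * g k i
            - pochhammer_deriv (of_nat (n * i) - of_nat k) m * p k i)"
  by (induction m)
    (simp_all add: Let_def ladd_def lscale_def th1_def th2_def pochhammer_Suc pochhammer_deriv_Suc
      algebra_simps)

lemma th2_iterate_log_free: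
  "(th2 ^^ m) (p, \<lambda>k i. 0, g) = (\<lambda>k i. of_nat i ^ m * p k i, \<lambda>k i. 0, \<lambda>k i. of_nat i ^ m * g k i)"
  by (induction m) (simp_all add: th2_def algebra_simps)

lemma L2_coeff_recurrence:
  fixes p g :: ser2 and k i :: nat
  assumes "L2 n (p, \<lambda>k i. 0, g) = lzero"
  shows "of_nat (Suc i) ^ n * g k (Suc i) = falling_fact n (of_nat k - of_nat (n * i)) * g k i
           + falling_fact_deriv n (of_nat k - of_nat (n * i)) * p k i"
proof -
  let ?y = "of_nat k - of_nat (n * i) :: complex" and ?x = "of_nat (n * i) - of_nat k :: complex"
  have falling: "falling_fact n ?y = (-1) ^ n * pochhammer ?x n"
    "falling_fact_deriv n ?y = - ((-1) ^ n * pochhammer_deriv ?x n)"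
    by (simp_all add: falling_fact_conv_pochhammer)
  have "snd (snd (L2 n (p, \<lambda>k i. 0, g))) k (Suc i) = 0"
    using assms by (simp add: lzero_def)
  then show ?thesis
    unfolding falling
    by (simp add: L2_def prodop_log_free th2_iterate_log_free ladd_def lscale_def mulz2_def
        shift2_def algebra_simps del: of_nat_Suc)
qed

lemma L1_coeff_recurrence:
  fixes p g :: ser2
  assumes "L1 n a0 a1 a2 (p, \<lambda>k i. 0, g) = lzero"
  shows "of_nat (Suc k) ^ 2 * g (Suc k) 0 + 2 * of_nat (Suc k) * p (Suc k) 0
     = a0 * ((2 * of_nat k + a1 + a2) * p k 0 + (of_nat k + a1) * (of_nat k + a2) * g k 0)"
proof -
  have "snd (snd (L1 n a0 a1 a2 (p, \<lambda>k i. 0, g))) (Suc k) 0 = 0"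
    using assms by (simp add: lzero_def)
  then show ?thesis
    by (simp add: L1_def ladd_def lscale_def th1_def th2_def mulz1_def shift1_def algebra_simps
        power2_eq_square)
qed

lemma recurrence_unique:
  fixes x y :: "nat \<Rightarrow> 'a::idom"
  assumes "\<And>k. c k * x (Suc k) = f k (x k)" and "\<And>k. c k * y (Suc k) = f k (y k)"
    and "\<And>k. c k \<noteq> 0" and "x 0 = y 0"
  shows "x k = y k"
proof (induction k)
  case 0
  show ?case by (fact assms(4))
next
  case (Suc k)
  then have "c k * x (Suc k) = c k * y (Suc k)"
    using assms(1,2) by simp
  with assms(3) show ?case by simp
qed

lemma column_zero_coeffs:
  fixes P H :: ser2
  assumes "L1 n a0 a1 a2 (\<lambda>k i. 0, \<lambda>k i. 0, P) = lzero" and "L1 n a0 a1 a2 (P, \<lambda>k i. 0, H) = lzero"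
    and "P 0 0 = 1"
  shows "P k 0 = Fser a0 a1 a2 $ k" and "H k 0 = Gser a0 a1 a2 $ k + H 0 0 * Fser a0 a1 a2 $ k"
proof -
  let ?F = "\<lambda>k. Fser a0 a1 a2 $ k" and ?G = "\<lambda>k. Gser a0 a1 a2 $ k"
  have sq: "of_nat (Suc k) ^ 2 \<noteq> (0 :: complex)" for k
    by (simp del: of_nat_Suc)
  have P: "P k 0 = ?F k" for k
  proof (rule recurrence_unique[where c = "\<lambda>k. of_nat (Suc k) ^ 2"])
    show "of_nat (Suc k) ^ 2 * P (Suc k) 0 = a0 * (of_nat k + a1) * (of_nat k + a2) * P k 0" for k
      using L1_coeff_recurrence[OF assms(1), of k] by simp
  qed (use sq Fser_Suc assms(3) in \<open>simp_all add: Fser_def\<close>)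
  then show "P k 0 = ?F k" .
  show "H k 0 = ?G k + H 0 0 * ?F k"
  proof (rule recurrence_unique[where c = "\<lambda>k. of_nat (Suc k) ^ 2"])
    show "of_nat (Suc k) ^ 2 * H (Suc k) 0 = a0 * ((2 * of_nat k + a1 + a2) * ?F k
        + (of_nat k + a1) * (of_nat k + a2) * H k 0) - 2 * of_nat (Suc k) * ?F (Suc k)" for k
      using L1_coeff_recurrence[OF assms(2), of k] P by (simp add: algebra_simps)
    show "of_nat (Suc k) ^ 2 * (?G (Suc k) + H 0 0 * ?F (Suc k)) = a0 * ((2 * of_nat k + a1 + a2) * ?F k
        + (of_nat k + a1) * (of_nat k + a2) * (?G k + H 0 0 * ?F k)) - 2 * of_nat (Suc k) * ?F (Suc k)" for k
      using Gser_Suc[of k] Fser_Suc[of k] by (simp add: algebra_simps)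
  qed (use sq in \<open>simp_all add: Fser_def Gser_def\<close>)
qed

lemma column_coeffs:
  fixes P H :: ser2
  assumes L1P: "L1 n a0 a1 a2 (\<lambda>k i. 0, \<lambda>k i. 0, P) = lzero"
    and L2P: "L2 n (\<lambda>k i. 0, \<lambda>k i. 0, P) = lzero"
    and L1H: "L1 n a0 a1 a2 (P, \<lambda>k i. 0, H) = lzero"
    and L2H: "L2 n (P, \<lambda>k i. 0, H) = lzero"
    and "P 0 0 = 1"
  shows "\<exists>c c'. \<forall>k.
     P k i = c * (falling_fact (n * i) (of_nat k) * Fser a0 a1 a2 $ k)
   \<and> H k i = c * (falling_fact (n * i) (of_nat k) * Gser a0 a1 a2 $ k
       + falling_fact_deriv (n * i) (of_nat k) * Fser a0 a1 a2 $ k) + c' * P k i"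
proof (induction i)
  case 0
  define h where "h = H 0 0"
  have "P k 0 = Fser a0 a1 a2 $ k" "H k 0 = Gser a0 a1 a2 $ k + h * Fser a0 a1 a2 $ k" for k
    unfolding h_def by (fact column_zero_coeffs[OF L1P L1H \<open>P 0 0 = 1\<close>])+
  then show ?case by (intro exI[of _ 1] exI[of _ h]) simp
next
  case (Suc i)
  then obtain c c' where
    P: "\<And>k. P k i = c * (falling_fact (n * i) (of_nat k) * Fser a0 a1 a2 $ k)" and
    H: "\<And>k. H k i = c * (falling_fact (n * i) (of_nat k) * Gser a0 a1 a2 $ k
          + falling_fact_deriv (n * i) (of_nat k) * Fser a0 a1 a2 $ k) + c' * P k i"
    by blast
  define D :: complex where "D = of_nat (Suc i) ^ n"
  have "D \<noteq> 0" by (simp add: D_def del: of_nat_Suc)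
  have "P k (Suc i) = c / D * (falling_fact (n * Suc i) (of_nat k) * Fser a0 a1 a2 $ k)
    \<and> H k (Suc i) = c / D * (falling_fact (n * Suc i) (of_nat k) * Gser a0 a1 a2 $ k
          + falling_fact_deriv (n * Suc i) (of_nat k) * Fser a0 a1 a2 $ k) + c' * P k (Suc i)" for k
  proof -
    let ?y = "of_nat k - of_nat (n * i) :: complex"
    have shift:
      "falling_fact (n * Suc i) (of_nat k :: complex) = falling_fact (n * i) (of_nat k) * falling_fact n ?y"
      "falling_fact_deriv (n * Suc i) (of_nat k :: complex) =
         falling_fact_deriv (n * i) (of_nat k) * falling_fact n ?y
         + falling_fact (n * i) (of_nat k) * falling_fact_deriv n ?y"
      using falling_fact_add[of "n * i" n "of_nat k"] by (simp_all add: add.commute)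
    have DP: "D * P k (Suc i) = c * (falling_fact (n * Suc i) (of_nat k) * Fser a0 a1 a2 $ k)"
      using L2_coeff_recurrence[OF L2P, where k = k and i = i] unfolding D_def[symmetric] P shift
      by (simp add: ac_simps)
    have "D * H k (Suc i) = c * (falling_fact (n * Suc i) (of_nat k) * Gser a0 a1 a2 $ k
          + falling_fact_deriv (n * Suc i) (of_nat k) * Fser a0 a1 a2 $ k) + c' * (D * P k (Suc i))"
      using L2_coeff_recurrence[OF L2H, where k = k and i = i]
        L2_coeff_recurrence[OF L2P, where k = k and i = i]
      unfolding D_def[symmetric] H P shift by (simp add: algebra_simps)
    with DP \<open>D \<noteq> 0\<close> show ?thesis
      by (simp add: field_simps)
  qed
  then show ?case by blast
qed

lemma Abs_fps_eq_X_power_mult_deriv_iterate: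
  assumes "\<And>k. f k = c * (falling_fact m (of_nat k) * F $ k)"
  shows "Abs_fps f = fps_const c * fps_X ^ m * (fps_deriv ^^ m) F"
  by (simp add: fps_eq_iff mult.assoc fps_X_power_mult_deriv_iterate_nth assms)

lemma log_pair_eq_zdlog:
  assumes "\<And>k. p k = c * (falling_fact m (of_nat k) * F $ k)"
    and "\<And>k. g k = c * (falling_fact m (of_nat k) * G $ k + falling_fact_deriv m (of_nat k) * F $ k) + c' * p k"
  shows "(fps_to_fls (Abs_fps p), fps_to_fls (Abs_fps g)) =
    (fls_const c * fst (zdlog m (fps_to_fls F, fps_to_fls G)),
     fls_const c * snd (zdlog m (fps_to_fls F, fps_to_fls G)) + fls_const c' * fps_to_fls (Abs_fps p))"
  by (auto simp: zdlog_fps_to_fls fls_eq_iff assms algebra_simps)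

theorem proposition4:
  fixes n :: nat and a0 a1 a2 :: complex and P0 H1 :: ser2
  assumes "n \<ge> 1" and "a0 \<noteq> 0"
    and "holo0 P0" and "P0 0 0 = 1"
    and "L1 n a0 a1 a2 (\<lambda>k i. 0, \<lambda>k i. 0, P0) = lzero"
    and "L2 n (\<lambda>k i. 0, \<lambda>k i. 0, P0) = lzero"
    and "holo0 H1"
    and "L1 n a0 a1 a2 (P0, \<lambda>k i. 0, H1) = lzero"
    and "L2 n (P0, \<lambda>k i. 0, H1) = lzero"
  shows "\<forall>i. \<exists>c0 c1 c1' :: complex.
     Abs_fps (\<lambda>k. P0 k i) = fps_const c0 * fps_X ^ (n * i) * (fps_deriv ^^ (n * i)) (Fser a0 a1 a2)
   \<and> (fps_to_fls (Abs_fps (\<lambda>k. P0 k i)), fps_to_fls (Abs_fps (\<lambda>k. H1 k i)))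
       = (fls_const c1 * fst (zdlog (n * i) (fps_to_fls (Fser a0 a1 a2), fps_to_fls (Gser a0 a1 a2))),
          fls_const c1 * snd (zdlog (n * i) (fps_to_fls (Fser a0 a1 a2), fps_to_fls (Gser a0 a1 a2)))
          + fls_const c1' * fps_to_fls (Abs_fps (\<lambda>k. P0 k i)))"
proof (rule allI, goal_cases)
  case (1 i)
  show ?case
    using column_coeffs[OF assms(5,6,8,9,4), of i]
      Abs_fps_eq_X_power_mult_deriv_iterate[of "\<lambda>k. P0 k i"]
      log_pair_eq_zdlog[of "\<lambda>k. P0 k i" _ _ _ "\<lambda>k. H1 k i"]
    by blast
qed

end
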